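(* Let $(T,\mathsf{T})$ be a measurable space, $(X,d)$ a complete separable metric space, and let $f:T\to X$ and $\rho:T\to[0,\infty)$ be measurable. Let $\phi:X\times X\to[0,\infty)$ be a Carath\'eodory distance. Then the set-valued map $t\mapsto\overline{B}^\phi_{\rho(t)}(f(t))$ is graph measurable.
   Context: A Carath\'eodory distance is a function $\phi:X\times X\to[0,\infty)$ continuous in its left argument and Borel measurable in its right argument. $\overline{B}^\phi_r(x):=\{y\in X\mid\phi(y,x)\le r\}$. A set-valued map $\varphi:T\to2^X$ is graph measurable if $\{(t,x)\mid x\in\varphi(t)\}\in\mathsf{T}\otimes\mathsf{B}(X)$. *)

theory Defs
  imports "HOL-Analysis.Analysis"
begin

definition caratheodory_distance :: "('x::metric_space \<Rightarrow> 'x \<Rightarrow> real) \<Rightarrow> bool" where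
  "caratheodory_distance \<phi> \<longleftrightarrow>
     (\<forall>x y. 0 \<le> \<phi> x y) \<and>
     (\<forall>y. continuous_on UNIV (\<lambda>x. \<phi> x y)) \<and>
     (\<forall>x. (\<lambda>y. \<phi> x y) \<in> borel_measurable borel)"

definition phi_cball :: "('x \<Rightarrow> 'x \<Rightarrow> real) \<Rightarrow> 'x \<Rightarrow> real \<Rightarrow> 'x set" where
  "phi_cball \<phi> x r = {y. \<phi> y x \<le> r}"

definition graph_measurable :: "'t measure \<Rightarrow> ('t \<Rightarrow> 'x::topological_space set) \<Rightarrow> bool" where
  "graph_measurable M F \<longleftrightarrow> {(t, x). t \<in> space M \<and> x \<in> F t} \<in> sets (M \<Otimes>\<^sub>M borel)"

end

theory Submission
  imports Defs
begin

text \<open>The map \<open>(t, y) \<mapsto> \<phi>(y, f t)\<close> is jointly measurable: on a countable dense set \<open>{s i}\<close>,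
  each \<open>t \<mapsto> \<phi>(s i, f t)\<close> is measurable, and \<open>\<phi>(y, f t)\<close> is the limit of \<open>\<phi>(s (k n y), f t)\<close>
  along a measurable choice of indices \<open>k n y\<close> with \<open>s (k n y) \<rightarrow> y\<close>, by continuity in \<open>y\<close>.
  The graph is then the sublevel set \<open>{(t, y). \<phi>(y, f t) \<le> \<rho> t}\<close> of a measurable function.\<close>

lemma measurable_dense_approximation:
  obtains s :: "nat \<Rightarrow> 'x::{metric_space, second_countable_topology}"
    and k :: "nat \<Rightarrow> 'x \<Rightarrow> nat"
  where "\<And>n. k n \<in> borel \<rightarrow>\<^sub>M count_space UNIV"
    and "\<And>y. (\<lambda>n. s (k n y)) \<longlonglongrightarrow> y"
proof -
  obtain D :: "'x set" where D: "countable D" "\<And>U. open U \<Longrightarrow> U \<noteq> {} \<Longrightarrow> \<exists>d\<in>D. d \<in> U"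
    using countable_dense_exists by blast
  define s where "s = from_nat_into D"
  have dense: "\<exists>i. dist (s i) y < e" if "e > 0" for y e
  proof -
    obtain d where "d \<in> D" "d \<in> ball y e"
      using D(2)[of "ball y e"] \<open>e > 0\<close> by auto
    then show ?thesis
      unfolding s_def using from_nat_into_surj[OF D(1)] by (metis dist_commute mem_ball)
  qed
  define k where "k n y = (LEAST i. dist (s i) y < 1 / Suc n)" for n y
  have "k n \<in> borel \<rightarrow>\<^sub>M count_space UNIV" for n
    unfolding k_def by measurable
  moreover have "(\<lambda>n. s (k n y)) \<longlonglongrightarrow> y" for y
  proof (rule tendsto_dist_iff[THEN iffD2], rule Lim_null_comparison)
    have "dist (s (k n y)) y < 1 / Suc n" for n
      unfolding k_def by (rule LeastI_ex) (rule dense, simp)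
    then show "\<forall>\<^sub>F n in sequentially. norm (dist (s (k n y)) y) \<le> 1 / real (Suc n)"
      by (simp add: less_imp_le)
    show "(\<lambda>n. 1 / real (Suc n)) \<longlonglongrightarrow> 0"
      using LIMSEQ_inverse_real_of_nat by (simp add: inverse_eq_divide)
  qed
  ultimately show ?thesis
    by (rule that)
qed

lemma borel_measurable_caratheodory:
  fixes g :: "'a \<Rightarrow> 'x::{metric_space, second_countable_topology} \<Rightarrow> 'b::metric_space"
  assumes cont: "\<And>t. t \<in> space M \<Longrightarrow> continuous_on UNIV (g t)"
    and meas: "\<And>x. (\<lambda>t. g t x) \<in> borel_measurable M"
  shows "(\<lambda>w. g (fst w) (snd w)) \<in> borel_measurable (M \<Otimes>\<^sub>M borel)"
proof -
  obtain k and s :: "nat \<Rightarrow> 'x" where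
    k: "\<And>n. k n \<in> borel \<rightarrow>\<^sub>M count_space UNIV" and lim: "\<And>y. (\<lambda>n. s (k n y)) \<longlonglongrightarrow> y"
    by (rule measurable_dense_approximation) (rule that)
  show ?thesis
  proof (rule borel_measurable_LIMSEQ_metric)
    show "(\<lambda>w. g (fst w) (s (k n (snd w)))) \<in> borel_measurable (M \<Otimes>\<^sub>M borel)" for n
    proof (rule measurable_compose_countable[where f = "\<lambda>i w. g (fst w) (s i)"])
      show "(\<lambda>w. g (fst w) (s i)) \<in> borel_measurable (M \<Otimes>\<^sub>M borel)" for i
        using measurable_compose[OF measurable_fst meas] .
      show "(\<lambda>w. k n (snd w)) \<in> M \<Otimes>\<^sub>M borel \<rightarrow>\<^sub>M count_space UNIV"
        using measurable_compose[OF measurable_snd k] .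
    qed
    show "(\<lambda>n. g (fst w) (s (k n (snd w)))) \<longlonglongrightarrow> g (fst w) (snd w)"
      if "w \<in> space (M \<Otimes>\<^sub>M borel)" for w
    proof (rule isCont_tendsto_compose[OF _ lim])
      show "isCont (g (fst w)) (snd w)"
        using cont[of "fst w"] that by (auto simp: space_pair_measure continuous_on_eq_continuous_at)
    qed
  qed
qed

theorem lemma2p9:
  fixes M :: "'t measure"
    and f :: "'t \<Rightarrow> 'x::polish_space"
    and \<rho> :: "'t \<Rightarrow> real"
    and \<phi> :: "'x \<Rightarrow> 'x \<Rightarrow> real"
  assumes "f \<in> M \<rightarrow>\<^sub>M borel"
    and "\<rho> \<in> borel_measurable M"
    and "\<forall>t\<in>space M. 0 \<le> \<rho> t"
    and "caratheodory_distance \<phi>"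
  shows "graph_measurable M (\<lambda>t. phi_cball \<phi> (f t) (\<rho> t))"
proof -
  note [measurable] = assms(1,2)
  have "\<And>t. continuous_on UNIV (\<lambda>x. \<phi> x (f t))" and "\<And>x. \<phi> x \<in> borel_measurable borel"
    using assms(4) by (auto simp: caratheodory_distance_def)
  then have [measurable]: "(\<lambda>w. \<phi> (snd w) (f (fst w))) \<in> borel_measurable (M \<Otimes>\<^sub>M borel)"
    by (intro borel_measurable_caratheodory[where g = "\<lambda>t x. \<phi> x (f t)"])
      (auto intro: measurable_compose[OF assms(1)])
  have "{(t, x). t \<in> space M \<and> x \<in> phi_cball \<phi> (f t) (\<rho> t)}
      = {w \<in> space (M \<Otimes>\<^sub>M borel). \<phi> (snd w) (f (fst w)) \<le> \<rho> (fst w)}"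
    by (auto simp: phi_cball_def space_pair_measure)
  also have "\<dots> \<in> sets (M \<Otimes>\<^sub>M borel)"
    by measurable
  finally show ?thesis
    unfolding graph_measurable_def .
qed

end
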